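(* Fix $\zeta\in Z$ and let $(k_c,k_e)$ be a pair of monotone decreasing kinetic functions (as defined in the context), with associated numbers $\tau_\ell^{sc}$ and $\tau_v^{sc}:=k_c(\tau_\ell^{sc})$. (a) For every fixed $\tau_R\in(\tau_v^{\min},\tau_v^{sc}]$ there exists a unique $\hat\tau\in\mathcal A_\ell$ such that $$p'(\tau_R)=\frac{p(\tau_R)-p(\hat\tau)-\zeta}{\tau_R-\hat\tau},$$ or equivalently $c(\tau_R)=s_c(\hat\tau,\tau_R)$. Moreover $\hat\tau\in(\tau_\ell^{\min},\tau_\ell^{sc}]$. (b) For every fixed $\tau_R>\tau_v^{sc}$ there exists a unique $\check\tau$ in the domain $[\tau_\ell^{sc},\tau_\ell^{sat}]\subset\mathcal A_\ell$ of $k_c$ such that $$\frac{p(k_c(\check\tau))-p(\check\tau)-\zeta}{k_c(\check\tau)-\check\tau}=\frac{p(\tau_R)-p(\check\tau)-\zeta}{\tau_R-\check\tau},$$ or equivalently $s_c(\check\tau,k_c(\check\tau))=s_c(\check\tau,\tau_R)$. Moreover $\check\tau\in(\tau_\ell^{sc},\tau_\ell^{sat})$.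
   Context: Thermodynamic setting. Fix real numbers $0<\tau_\ell^{\min}<\tau_\ell^{\max}<\tau_v^{\min}$ and $\zeta^{\min}<0<\zeta^{\max}$. Set $\mathcal A_\ell=(\tau_\ell^{\min},\tau_\ell^{\max})$, $\mathcal A_v=(\tau_v^{\min},\infty)$ and $Z=(\zeta^{\min},\zeta^{\max})$. Let $p\in C^2(\mathcal A_\ell\cup\mathcal A_v)$ and $\psi,\mu\in C^3(\mathcal A_\ell\cup\mathcal A_v)$ with $p=-\psi'$ and $\mu=\psi+p\tau$. Assume: (H1) $p'<0$; (H2) $p''>0$ on $\mathcal A_\ell\cup\mathcal A_v$; (H3) for every $\zeta\in Z$ there exist $\tau_\ell^{sat}(\zeta)\in\mathcal A_\ell$, $\tau_v^{sat}(\zeta)\in\mathcal A_v$ with $p(\tau_v^{sat})-p(\tau_\ell^{sat})=\zeta$, $\mu(\tau_v^{sat})=\mu(\tau_\ell^{sat})$; (H4) $p(\tau)\to\infty$ as $\tau\to\tau_\ell^{\min}$; (H5) $p'(\tau_\ell)<p'(\tau_v)$ for all $\tau_\ell\in\mathcal A_\ell,\tau_v\in\mathcal A_v$; (H6) $\int_{\tau_v^{\min}}^R c\,d\tau\to\infty$ as $R\to\infty$, where $c(\tau)=\sqrt{-p'(\tau)}$. For the fixed $\zeta$ write $\tau_\ell^{sat}=\tau_\ell^{sat}(\zeta)$, $\tau_v^{sat}=\tau_v^{sat}(\zeta)$. Speeds: $s_e(\tau_\ell,\tau_v)=-\sqrt{\frac{\zeta-p(\tau_v)+p(\tau_\ell)}{\tau_v-\tau_\ell}}$,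 $s_c(\tau_\ell,\tau_v)=+\sqrt{\frac{\zeta-p(\tau_v)+p(\tau_\ell)}{\tau_v-\tau_\ell}}$. Driving force: $f(\tau_\ell,\tau_v)=\psi(\tau_v)-\psi(\tau_\ell)+(\tau_v-\tau_\ell)\frac{p(\tau_\ell)+p(\tau_v)}2+\zeta\frac{\tau_\ell+\tau_v}2$. Pair of monotone decreasing kinetic functions: given numbers $\tau_\ell^{sc}\in(\tau_\ell^{\min},\tau_\ell^{sat})$, $\tau_v^{se}\in(\tau_v^{\min},\infty)$ and differentiable functions $k_c:[\tau_\ell^{sc},\tau_\ell^{sat}]\to\mathcal A_v$, $k_e:[\tau_v^{sat},\tau_v^{se}]\to\mathcal A_\ell$ such that $k_c'\le0$, $k_e'\le0$; $f(\tau_\ell,k_c(\tau_\ell))\ge0$ for all $\tau_\ell\in[\tau_\ell^{sc},\tau_\ell^{sat}]$ and $f(k_e(\tau_v),\tau_v)\le0$ for all $\tau_v\in[\tau_v^{sat},\tau_v^{se}]$; $k_c(\tau_\ell^{sat})=\tau_v^{sat}$, $k_c(\tau_\ell^{sc})=\tau_v^{sc}$ with $|s_c(\tau_\ell^{sc},\tau_v^{sc})|=c(\tau_v^{sc})$; $k_e(\tau_v^{sat})=\tau_\ell^{sat}$, $k_e(\tau_v^{se})=\tau_\ell^{se}$ with $|s_e(\tau_\ell^{se},\tau_v^{se})|=c(\tau_v^{se})$, and $k_e'(\tau_v^{se})=0$. *)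

theory Defs
  imports "HOL-Analysis.Analysis"
begin

definition Ck_on :: "nat \<Rightarrow> real set \<Rightarrow> (real \<Rightarrow> real) \<Rightarrow> bool" where
  "Ck_on k S f \<longleftrightarrow> (\<exists>D. D 0 = f \<and>
     (\<forall>i<k. \<forall>x\<in>S. (D i has_real_derivative D (Suc i) x) (at x)) \<and>
     continuous_on S (D k))"

definition sound_speed :: "(real \<Rightarrow> real) \<Rightarrow> real \<Rightarrow> real" where
  "sound_speed p \<tau> = sqrt (- deriv p \<tau>)"

definition s_c :: "(real \<Rightarrow> real) \<Rightarrow> real \<Rightarrow> real \<Rightarrow> real \<Rightarrow> real" where
  "s_c p \<zeta> \<tau>l \<tau>v = sqrt ((\<zeta> - p \<tau>v + p \<tau>l) / (\<tau>v - \<tau>l))"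

definition s_e :: "(real \<Rightarrow> real) \<Rightarrow> real \<Rightarrow> real \<Rightarrow> real \<Rightarrow> real" where
  "s_e p \<zeta> \<tau>l \<tau>v = - sqrt ((\<zeta> - p \<tau>v + p \<tau>l) / (\<tau>v - \<tau>l))"

definition driving_force ::
  "(real \<Rightarrow> real) \<Rightarrow> (real \<Rightarrow> real) \<Rightarrow> real \<Rightarrow> real \<Rightarrow> real \<Rightarrow> real" where
  "driving_force \<psi> p \<zeta> \<tau>l \<tau>v =
     \<psi> \<tau>v - \<psi> \<tau>l + (\<tau>v - \<tau>l) * ((p \<tau>l + p \<tau>v) / 2) + \<zeta> * ((\<tau>l + \<tau>v) / 2)"

end

theory Submission
  imports Defs
begin

text \<open>(a) For fixed \<open>\<tau>R\<close> the defect \<open>p \<tau>R - p t - \<zeta> - p'(\<tau>R) (\<tau>R - t)\<close> is strictly increasing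
  in the liquid volume t. It tends to \<open>-\<infinity>\<close> at \<open>\<tau>lmin\<close> because p blows up there, and it is
  nonnegative at \<open>\<tau>lsc\<close> because the chord of the sonic pair is tangent to p at \<open>\<tau>vsc \<ge> \<tau>R\<close>.
  Hence it has exactly one zero, and that zero lies left of \<open>\<tau>lsc\<close>.

  (b) The three points \<open>(t, p t + \<zeta>)\<close>, \<open>(k_c t, p (k_c t))\<close>, \<open>(\<tau>R, p \<tau>R)\<close> are collinear iff the
  slope m(t) from the first to the last equals the slope \<open>\<sigma>(k_c t)\<close> of the vapour chord from
  \<open>k_c t\<close> to \<open>\<tau>R\<close>. Here m is strictly increasing, \<open>\<sigma>\<close> is increasing by convexity and \<open>k_c\<close>
  is decreasing, so \<open>m - \<sigma> \<circ> k_c\<close> is strictly increasing; it is negative at \<open>\<tau>lsc\<close> (sonic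
  tangency) and positive at \<open>\<tau>lsat\<close> (saturation jump \<open>p \<tau>vsat - p \<tau>lsat = \<zeta>\<close>).\<close>

lemma Ck_on_2_DERIV:
  assumes "Ck_on 2 S f" "open S" "x \<in> S"
  shows "(f has_real_derivative deriv f x) (at x)"
    and "(deriv f has_real_derivative deriv (deriv f) x) (at x)"
proof -
  obtain D where D0: "D 0 = f"
    and DD: "\<forall>i<2. \<forall>x\<in>S. (D i has_real_derivative D (Suc i) x) (at x)"
    using assms(1) unfolding Ck_on_def by blast
  have D1: "(f has_real_derivative D 1 y) (at y)" if "y \<in> S" for y
    using DD D0 that by (metis One_nat_def less_2_cases_iff)
  then have deriv_eq: "deriv f y = D 1 y" if "y \<in> S" for y
    using DERIV_imp_deriv that by blast
  show "(f has_real_derivative deriv f x) (at x)"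
    using D1 deriv_eq assms(3) by simp
  have "(D 1 has_real_derivative D 2 x) (at x)"
    using DD assms(3) by (metis Suc_1 lessI One_nat_def)
  then have "(deriv f has_real_derivative D 2 x) (at x)"
    by (rule has_field_derivative_transform_within_open[OF _ assms(2,3)]) (simp add: deriv_eq)
  then show "(deriv f has_real_derivative deriv (deriv f) x) (at x)"
    using DERIV_imp_deriv by metis
qed

lemma strict_mono_on_if_DERIV_pos:
  fixes f :: "real \<Rightarrow> real"
  assumes "is_interval I"
    and "\<And>x. x \<in> I \<Longrightarrow> (f has_real_derivative f' x) (at x)"
    and "\<And>x. x \<in> I \<Longrightarrow> 0 < f' x"
  shows "strict_mono_on I f"
proof (rule strict_mono_onI)
  fix r s assume "r \<in> I" "s \<in> I" "r < s"
  then have "z \<in> I" if "r \<le> z" "z \<le> s" for z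
    using assms(1) that unfolding is_interval_1 by blast
  then show "f r < f s"
    using DERIV_pos_imp_increasing[OF \<open>r < s\<close>] assms(2,3) by blast
qed

lemma antimono_on_if_DERIV_within_nonpos:
  fixes f :: "real \<Rightarrow> real"
  assumes deriv: "\<And>x. x \<in> {a..b} \<Longrightarrow> (f has_real_derivative f' x) (at x within {a..b})"
    and nonpos: "\<And>x. x \<in> {a..b} \<Longrightarrow> f' x \<le> 0"
  shows "antimono_on {a..b} f"
proof (rule monotone_onI)
  fix x y assume xy: "x \<in> {a..b}" "y \<in> {a..b}" "x \<le> y"
  have cont: "continuous_on {a..b} f"
    using deriv by (meson DERIV_continuous continuous_on_eq_continuous_within)
  show "f y \<le> f x"
  proof (rule DERIV_nonpos_imp_decreasing_open[OF \<open>x \<le> y\<close>])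
    fix z assume "x < z" "z < y"
    then have "z \<in> {a..b}" "at z within {a..b} = at z"
      using xy by (auto intro: at_within_Icc_at)
    then show "\<exists>d. (f has_real_derivative d) (at z) \<and> d \<le> 0"
      using deriv nonpos by metis
  next
    show "continuous_on {x..y} f"
      using cont by (rule continuous_on_subset) (use xy in auto)
  qed
qed

lemma secant_bounds_if_deriv_strict_mono:
  fixes f f' :: "real \<Rightarrow> real"
  assumes "a < b"
    and "\<And>x. x \<in> {a..b} \<Longrightarrow> (f has_real_derivative f' x) (at x)"
    and "strict_mono_on {a..b} f'"
  shows "f' a * (b - a) < f b - f a" and "f b - f a < f' b * (b - a)"
proof -
  obtain z where z: "a < z" "z < b" "f b - f a = (b - a) * f' z"
    using MVT2[of a b f f'] assms(1,2) by auto
  have "f' a < f' z" "f' z < f' b"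
    using strict_mono_onD[OF assms(3)] z by auto
  then show "f' a * (b - a) < f b - f a" "f b - f a < f' b * (b - a)"
    using z assms(1) by (simp_all add: mult.commute)
qed

lemma secant_slope_less_if_deriv_strict_mono:
  fixes f f' :: "real \<Rightarrow> real"
  assumes "a < b" "b < c"
    and deriv: "\<And>x. x \<in> {a..c} \<Longrightarrow> (f has_real_derivative f' x) (at x)"
    and mono: "strict_mono_on {a..c} f'"
  shows "(f c - f a) / (c - a) < (f c - f b) / (c - b)"
proof -
  have left: "f b - f a < f' b * (b - a)"
    using secant_bounds_if_deriv_strict_mono(2)[OF \<open>a < b\<close>] deriv assms(2)
      monotone_on_subset[OF mono] by auto
  have right: "f' b * (c - b) < f c - f b"
    using secant_bounds_if_deriv_strict_mono(1)[OF \<open>b < c\<close>] deriv assms(1)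
      monotone_on_subset[OF mono] by auto
  have "(f b - f a) * (c - b) < f' b * (b - a) * (c - b)"
    using left assms(2) by simp
  also have "\<dots> = f' b * (c - b) * (b - a)"
    by (simp add: mult_ac)
  also have "\<dots> < (f c - f b) * (b - a)"
    using right assms(1) by simp
  finally have "(f c - f a) * (c - b) < (f c - f b) * (c - a)"
    by (simp add: algebra_simps)
  then show ?thesis
    using assms(1,2) by (simp add: divide_simps)
qed

lemma secant_slopes_eq_iff:
  fixes t k r yk yr q :: real
  assumes "t < k" "k < r"
  shows "(yk - q) / (k - t) = (yr - q) / (r - t) \<longleftrightarrow> (yr - q) / (r - t) = (yr - yk) / (r - k)"
proof -
  have "(yk - q) / (k - t) = (yr - q) / (r - t) \<longleftrightarrow> (yk - q) * (r - t) = (yr - q) * (k - t)"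
    using assms by (simp add: frac_eq_eq)
  also have "\<dots> \<longleftrightarrow> (yr - q) * (r - k) = (yr - yk) * (r - t)"
    by (simp add: algebra_simps)
  also have "\<dots> \<longleftrightarrow> (yr - q) / (r - t) = (yr - yk) / (r - k)"
    using assms by (simp add: frac_eq_eq)
  finally show ?thesis .
qed

lemma strict_mono_on_unique_zero:
  fixes g :: "real \<Rightarrow> real"
  assumes mono: "strict_mono_on S g" and "continuous_on {a..b} g" "{a..b} \<subseteq> S"
    and "a \<le> b" "g a \<le> 0" "0 \<le> g b"
  shows "\<exists>!t. t \<in> S \<and> g t = 0"
proof -
  obtain t where "a \<le> t" "t \<le> b" "g t = 0"
    using IVT'[of g a 0 b] assms by auto
  then show ?thesis
    using assms(3) strict_mono_on_eqD[OF mono] by (intro ex1I[of _ t]) auto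
qed

lemma sound_speed_eq_s_c_iff:
  "sound_speed p \<tau> = s_c p \<zeta> t \<tau> \<longleftrightarrow> deriv p \<tau> = (p \<tau> - p t - \<zeta>) / (\<tau> - t)"
proof -
  have "(\<zeta> - p \<tau> + p t) / (\<tau> - t) = - ((p \<tau> - p t - \<zeta>) / (\<tau> - t))"
    by (simp flip: divide_minus_left)
  then show ?thesis
    unfolding sound_speed_def s_c_def by auto
qed

lemma s_c_eq_iff:
  "s_c p \<zeta> t a = s_c p \<zeta> t b \<longleftrightarrow> (p a - p t - \<zeta>) / (a - t) = (p b - p t - \<zeta>) / (b - t)"
proof -
  have "(\<zeta> - p x + p t) / (x - t) = - ((p x - p t - \<zeta>) / (x - t))" for x
    by (simp flip: divide_minus_left)
  then show ?thesis
    unfolding s_c_def by auto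
qed

locale convex_two_phase_pressure =
  fixes \<tau>lmin \<tau>lmax \<tau>vmin :: real and p :: "real \<Rightarrow> real"
  assumes phases_ordered: "\<tau>lmin < \<tau>lmax" "\<tau>lmax < \<tau>vmin"
    and p_DERIV: "\<And>x. x \<in> {\<tau>lmin<..<\<tau>lmax} \<union> {\<tau>vmin<..} \<Longrightarrow>
      (p has_real_derivative deriv p x) (at x)"
    and deriv_p_neg: "\<And>x. x \<in> {\<tau>lmin<..<\<tau>lmax} \<union> {\<tau>vmin<..} \<Longrightarrow> deriv p x < 0"
    and deriv_p_strict_mono_liquid: "strict_mono_on {\<tau>lmin<..<\<tau>lmax} (deriv p)"
    and deriv_p_strict_mono_vapour: "strict_mono_on {\<tau>vmin<..} (deriv p)"
    and deriv_p_liquid_less_vapour: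
      "\<And>x y. x \<in> {\<tau>lmin<..<\<tau>lmax} \<Longrightarrow> y \<in> {\<tau>vmin<..} \<Longrightarrow> deriv p x < deriv p y"
    and p_tendsto_at_top_liquid: "filterlim p at_top (at_right \<tau>lmin)"
begin

abbreviation liquid :: "real set" where "liquid \<equiv> {\<tau>lmin<..<\<tau>lmax}"
abbreviation vapour :: "real set" where "vapour \<equiv> {\<tau>vmin<..}"

lemma liquid_less_vapour: "x \<in> liquid \<Longrightarrow> y \<in> vapour \<Longrightarrow> x < y"
  using phases_ordered by auto

lemma p_continuous_on: "continuous_on (liquid \<union> vapour) p"
  using p_DERIV by (meson DERIV_isCont continuous_at_imp_continuous_on)

lemma p_secant_bounds:
  assumes "{a..b} \<subseteq> liquid \<or> {a..b} \<subseteq> vapour" "a < b"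
  shows "deriv p a * (b - a) < p b - p a" and "p b - p a < deriv p b * (b - a)"
proof -
  have "strict_mono_on {a..b} (deriv p)"
    using assms(1) deriv_p_strict_mono_liquid deriv_p_strict_mono_vapour
    by (auto intro: monotone_on_subset)
  moreover have "(p has_real_derivative deriv p x) (at x)" if "x \<in> {a..b}" for x
    using assms(1) p_DERIV that by blast
  ultimately show "deriv p a * (b - a) < p b - p a" "p b - p a < deriv p b * (b - a)"
    using secant_bounds_if_deriv_strict_mono[OF \<open>a < b\<close>] by blast+
qed

lemma p_strict_antimono:
  assumes "{a..b} \<subseteq> liquid \<or> {a..b} \<subseteq> vapour" "a < b"
  shows "p b < p a"
proof -
  have "b \<in> {a..b}"
    using assms(2) by simp
  then have "b \<in> liquid \<union> vapour"
    using assms(1) by blast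
  then have "deriv p b * (b - a) < 0"
    using deriv_p_neg assms(2) by (simp add: mult_neg_pos)
  then show ?thesis
    using p_secant_bounds(2)[OF assms] by linarith
qed

lemma tangent_defect_strict_mono:
  assumes "\<tau>R \<in> vapour"
  shows "strict_mono_on liquid (\<lambda>t. p \<tau>R - p t - \<zeta> - deriv p \<tau>R * (\<tau>R - t))"
proof (rule strict_mono_onI)
  fix r s assume rs: "r \<in> liquid" "s \<in> liquid" "r < s"
  then have "{r..s} \<subseteq> liquid"
    by auto
  then have "p s - p r < deriv p s * (s - r)"
    using p_secant_bounds(2) rs(3) by blast
  also have "\<dots> < deriv p \<tau>R * (s - r)"
    using deriv_p_liquid_less_vapour rs assms by (intro mult_strict_right_mono) auto
  finally show "p \<tau>R - p r - \<zeta> - deriv p \<tau>R * (\<tau>R - r) < p \<tau>R - p s - \<zeta> - deriv p \<tau>R * (\<tau>R - s)"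
    by (simp add: algebra_simps)
qed

lemma tangent_defect_eventually_neg:
  assumes "\<tau>R \<in> vapour"
  shows "\<forall>\<^sub>F t in at_right \<tau>lmin. p \<tau>R - p t - \<zeta> - deriv p \<tau>R * (\<tau>R - t) < 0"
proof -
  have "\<forall>\<^sub>F t in at_right \<tau>lmin. p \<tau>R - \<zeta> - deriv p \<tau>R * (\<tau>R - \<tau>lmin) < p t"
    using p_tendsto_at_top_liquid by (simp add: filterlim_at_top_dense)
  moreover have "\<forall>\<^sub>F t in at_right \<tau>lmin. \<tau>lmin < t"
    by (rule eventually_at_right_less)
  ultimately show ?thesis
  proof eventually_elim
    case (elim t)
    have "deriv p \<tau>R < 0"
      using deriv_p_neg assms by blast
    then have "- deriv p \<tau>R * (\<tau>R - t) < - deriv p \<tau>R * (\<tau>R - \<tau>lmin)"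
      using elim(2) by (intro mult_strict_left_mono) auto
    with elim(1) show ?case
      by linarith
  qed
qed

lemma tangent_defect_nonneg:
  assumes tangency: "p \<tau>v - p \<tau>l - \<zeta> = deriv p \<tau>v * (\<tau>v - \<tau>l)"
    and "\<tau>l \<in> liquid" "\<tau>R \<in> vapour" "\<tau>R \<le> \<tau>v"
  shows "0 \<le> p \<tau>R - p \<tau>l - \<zeta> - deriv p \<tau>R * (\<tau>R - \<tau>l)"
proof (cases "\<tau>R = \<tau>v")
  case True
  then show ?thesis
    using tangency by simp
next
  case False
  then have "\<tau>R < \<tau>v"
    using assms(4) by simp
  moreover have "{\<tau>R..\<tau>v} \<subseteq> vapour"
    using assms(3) by auto
  ultimately have "p \<tau>v - p \<tau>R < deriv p \<tau>v * (\<tau>v - \<tau>R)"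
    using p_secant_bounds(2) by blast
  moreover have "0 < (deriv p \<tau>v - deriv p \<tau>R) * (\<tau>R - \<tau>l)"
    using strict_mono_onD[OF deriv_p_strict_mono_vapour] \<open>\<tau>R < \<tau>v\<close> assms(3)
      liquid_less_vapour[OF assms(2,3)] by (intro mult_pos_pos) auto
  moreover have "p \<tau>R - p \<tau>l - \<zeta> - deriv p \<tau>R * (\<tau>R - \<tau>l) =
      (p \<tau>R - p \<tau>v) + deriv p \<tau>v * (\<tau>v - \<tau>R) + (deriv p \<tau>v - deriv p \<tau>R) * (\<tau>R - \<tau>l)"
    using tangency by (simp add: algebra_simps)
  ultimately show ?thesis
    by linarith
qed

lemma tangent_point_unique:
  assumes tangency: "p \<tau>v - p \<tau>l - \<zeta> = deriv p \<tau>v * (\<tau>v - \<tau>l)"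
    and \<tau>l: "\<tau>l \<in> liquid" and \<tau>R: "\<tau>R \<in> vapour" "\<tau>R \<le> \<tau>v"
  shows "\<exists>!t. t \<in> liquid \<and> deriv p \<tau>R = (p \<tau>R - p t - \<zeta>) / (\<tau>R - t)"
    and "t \<in> liquid \<Longrightarrow> deriv p \<tau>R = (p \<tau>R - p t - \<zeta>) / (\<tau>R - t) \<Longrightarrow> t \<le> \<tau>l"
proof -
  define g where "g t = p \<tau>R - p t - \<zeta> - deriv p \<tau>R * (\<tau>R - t)" for t
  have zero_iff: "deriv p \<tau>R = (p \<tau>R - p t - \<zeta>) / (\<tau>R - t) \<longleftrightarrow> g t = 0" if "t \<in> liquid" for t
    using liquid_less_vapour[OF that \<tau>R(1)] unfolding g_def by (auto simp: field_simps)
  have mono: "strict_mono_on liquid g"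
    using tangent_defect_strict_mono[OF \<tau>R(1)] unfolding g_def .
  have nonneg: "0 \<le> g \<tau>l"
    using tangent_defect_nonneg[OF assms] unfolding g_def .
  have "\<forall>\<^sub>F t in at_right \<tau>lmin. g t < 0 \<and> t \<in> {\<tau>lmin<..<\<tau>l}"
    using tangent_defect_eventually_neg[OF \<tau>R(1)] eventually_at_right_real[of \<tau>lmin \<tau>l] \<tau>l
    unfolding g_def by (auto intro: eventually_conj)
  then obtain t0 where t0: "g t0 < 0" "\<tau>lmin < t0" "t0 < \<tau>l"
    using eventually_happens' trivial_limit_at_right_real by fastforce
  have sub: "{t0..\<tau>l} \<subseteq> liquid"
    using t0 \<tau>l by auto
  then have "continuous_on {t0..\<tau>l} g"
    unfolding g_def by (intro continuous_intros continuous_on_subset[OF p_continuous_on]) auto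
  then have "\<exists>!t. t \<in> liquid \<and> g t = 0"
    using strict_mono_on_unique_zero[OF mono _ sub] t0 nonneg by simp
  moreover have "t \<in> liquid \<and> deriv p \<tau>R = (p \<tau>R - p t - \<zeta>) / (\<tau>R - t) \<longleftrightarrow> t \<in> liquid \<and> g t = 0"
    for t
    using zero_iff by blast
  ultimately show "\<exists>!t. t \<in> liquid \<and> deriv p \<tau>R = (p \<tau>R - p t - \<zeta>) / (\<tau>R - t)"
    by (simp only:)
  show "t \<le> \<tau>l" if "t \<in> liquid" "deriv p \<tau>R = (p \<tau>R - p t - \<zeta>) / (\<tau>R - t)"
    using that zero_iff nonneg strict_mono_onD[OF mono, of \<tau>l t] \<tau>l by force
qed

lemma vapour_secant_slope_strict_mono:
  "strict_mono_on {\<tau>vmin<..<\<tau>R} (\<lambda>v. (p \<tau>R - p v) / (\<tau>R - v))"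
proof (rule strict_mono_onI)
  fix r s assume rs: "r \<in> {\<tau>vmin<..<\<tau>R}" "s \<in> {\<tau>vmin<..<\<tau>R}" "r < s"
  then have "{r..\<tau>R} \<subseteq> vapour"
    by auto
  then show "(p \<tau>R - p r) / (\<tau>R - r) < (p \<tau>R - p s) / (\<tau>R - s)"
    using secant_slope_less_if_deriv_strict_mono[of r s \<tau>R p "deriv p"] rs p_DERIV
      monotone_on_subset[OF deriv_p_strict_mono_vapour] by auto
qed

end

locale condensation_kinetics = convex_two_phase_pressure +
  fixes \<zeta> \<tau>lsat \<tau>vsat \<tau>lsc :: real and kc :: "real \<Rightarrow> real"
  assumes saturation: "\<tau>lsat \<in> liquid" "\<tau>vsat \<in> vapour" "p \<tau>vsat - p \<tau>lsat = \<zeta>"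
    and sonic_liquid_bounds: "\<tau>lmin < \<tau>lsc" "\<tau>lsc < \<tau>lsat"
    and kc_continuous: "continuous_on {\<tau>lsc..\<tau>lsat} kc"
    and kc_antimono: "antimono_on {\<tau>lsc..\<tau>lsat} kc"
    and kc_saturation: "kc \<tau>lsat = \<tau>vsat"
    and kc_sonic: "\<bar>s_c p \<zeta> \<tau>lsc (kc \<tau>lsc)\<bar> = sound_speed p (kc \<tau>lsc)"
begin

abbreviation \<tau>vsc :: real where "\<tau>vsc \<equiv> kc \<tau>lsc"

lemma kinetic_domain_liquid: "{\<tau>lsc..\<tau>lsat} \<subseteq> liquid"
  using saturation(1) sonic_liquid_bounds by auto

lemma kc_bounds:
  assumes "t \<in> {\<tau>lsc..\<tau>lsat}"
  shows "\<tau>vsat \<le> kc t" and "kc t \<le> \<tau>vsc"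
  using monotone_onD[OF kc_antimono, of t \<tau>lsat] monotone_onD[OF kc_antimono, of \<tau>lsc t]
    assms sonic_liquid_bounds kc_saturation by auto

lemma kc_vapour: "t \<in> {\<tau>lsc..\<tau>lsat} \<Longrightarrow> kc t \<in> vapour"
  using kc_bounds(1) saturation(2) by fastforce

lemma sonic_tangency: "p \<tau>vsc - p \<tau>lsc - \<zeta> = deriv p \<tau>vsc * (\<tau>vsc - \<tau>lsc)"
proof -
  have lsc: "\<tau>lsc \<in> {\<tau>lsc..\<tau>lsat}" and vsc: "\<tau>vsc \<in> vapour"
    using sonic_liquid_bounds kc_vapour by auto
  have "p \<tau>lsat < p \<tau>lsc"
    using p_strict_antimono kinetic_domain_liquid sonic_liquid_bounds(2) by blast
  moreover have "p \<tau>vsc \<le> p \<tau>vsat"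
  proof (cases "\<tau>vsat = \<tau>vsc")
    case False
    then have "\<tau>vsat < \<tau>vsc"
      using kc_bounds(1)[OF lsc] by simp
    moreover have "{\<tau>vsat..\<tau>vsc} \<subseteq> vapour"
      using saturation(2) by auto
    ultimately show ?thesis
      using p_strict_antimono by fastforce
  qed simp
  moreover have "\<tau>lsc < \<tau>vsc"
    using liquid_less_vapour kinetic_domain_liquid lsc vsc by blast
  \<comment> \<open>Since \<open>\<bar>sqrt x\<bar> = sqrt \<bar>x\<bar>\<close>, the sonic condition fixes the radicand only once it is known
    to be nonnegative.\<close>
  ultimately have "0 \<le> (\<zeta> - p \<tau>vsc + p \<tau>lsc) / (\<tau>vsc - \<tau>lsc)"
    using saturation(3) by simp
  then have "(\<zeta> - p \<tau>vsc + p \<tau>lsc) / (\<tau>vsc - \<tau>lsc) = - deriv p \<tau>vsc"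
    using kc_sonic deriv_p_neg[of \<tau>vsc] vsc unfolding s_c_def sound_speed_def by simp
  with \<open>\<tau>lsc < \<tau>vsc\<close> show ?thesis
    by (simp add: divide_eq_eq algebra_simps)
qed

lemma liquid_tangent_below_vapour_branch:
  assumes t: "t \<in> liquid" "t \<le> \<tau>lsat" and "\<tau>vsat < \<tau>R"
  shows "deriv p t * (\<tau>R - t) < p \<tau>R - p t - \<zeta>"
proof -
  have "{\<tau>vsat..\<tau>R} \<subseteq> vapour"
    using saturation(2) by auto
  then have "deriv p \<tau>vsat * (\<tau>R - \<tau>vsat) < p \<tau>R - p \<tau>vsat"
    using p_secant_bounds(1) assms(3) by blast
  moreover have "deriv p t * (\<tau>R - \<tau>vsat) < deriv p \<tau>vsat * (\<tau>R - \<tau>vsat)"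
    using deriv_p_liquid_less_vapour[OF t(1) saturation(2)] assms(3) by simp
  moreover have "deriv p t * (\<tau>lsat - t) \<le> p \<tau>lsat - p t"
  proof (cases "t = \<tau>lsat")
    case False
    then have "t < \<tau>lsat" "{t..\<tau>lsat} \<subseteq> liquid"
      using t saturation(1) by auto
    then show ?thesis
      using p_secant_bounds(1) by fastforce
  qed simp
  moreover have "0 < deriv p t * (\<tau>lsat - \<tau>vsat)"
    using deriv_p_neg[of t] t(1) liquid_less_vapour[OF saturation(1,2)] by (simp add: mult_neg_neg)
  moreover have "p \<tau>R - p t - \<zeta> - deriv p t * (\<tau>R - t) =
      (p \<tau>R - p \<tau>vsat) + (p \<tau>lsat - p t) - deriv p t * (\<tau>R - \<tau>vsat)
      - deriv p t * (\<tau>lsat - t) + deriv p t * (\<tau>lsat - \<tau>vsat)"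
    using saturation(3) by (simp add: algebra_simps)
  ultimately show ?thesis
    by linarith
qed

lemma liquid_secant_slope_strict_mono:
  assumes "\<tau>vsat < \<tau>R"
  shows "strict_mono_on {\<tau>lsc..\<tau>lsat} (\<lambda>t. (p \<tau>R - p t - \<zeta>) / (\<tau>R - t))"
proof (rule strict_mono_on_if_DERIV_pos)
  fix t assume "t \<in> {\<tau>lsc..\<tau>lsat}"
  then have t: "t \<in> liquid" "t \<le> \<tau>lsat" and "t < \<tau>R"
    using kinetic_domain_liquid liquid_less_vapour[of t \<tau>vsat] saturation(2) assms by auto
  then show "((\<lambda>t. (p \<tau>R - p t - \<zeta>) / (\<tau>R - t)) has_real_derivative
      (p \<tau>R - p t - \<zeta> - deriv p t * (\<tau>R - t)) / (\<tau>R - t)\<^sup>2) (at t)"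
    by (auto intro!: derivative_eq_intros p_DERIV simp: field_simps power2_eq_square)
  show "0 < (p \<tau>R - p t - \<zeta> - deriv p t * (\<tau>R - t)) / (\<tau>R - t)\<^sup>2"
    using liquid_tangent_below_vapour_branch[OF t assms] \<open>t < \<tau>R\<close> by simp
qed simp

lemma sonic_secant_slope_less:
  assumes "\<tau>vsc < \<tau>R"
  shows "(p \<tau>R - p \<tau>lsc - \<zeta>) / (\<tau>R - \<tau>lsc) < (p \<tau>R - p \<tau>vsc) / (\<tau>R - \<tau>vsc)"
    (is "_ < ?\<sigma>")
proof -
  have "\<tau>lsc \<in> {\<tau>lsc..\<tau>lsat}"
    using sonic_liquid_bounds by simp
  then have lsc: "\<tau>lsc \<in> liquid" "\<tau>vsc \<in> vapour"
    using kinetic_domain_liquid kc_vapour by auto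
  then have "{\<tau>vsc..\<tau>R} \<subseteq> vapour"
    by auto
  then have "deriv p \<tau>vsc * (\<tau>R - \<tau>vsc) < p \<tau>R - p \<tau>vsc"
    using p_secant_bounds(1) assms by blast
  then have "deriv p \<tau>vsc < ?\<sigma>"
    using assms by (simp add: pos_less_divide_eq)
  have "p \<tau>R - p \<tau>lsc - \<zeta> = ?\<sigma> * (\<tau>R - \<tau>vsc) + deriv p \<tau>vsc * (\<tau>vsc - \<tau>lsc)"
    using sonic_tangency assms by simp
  also have "\<dots> < ?\<sigma> * (\<tau>R - \<tau>vsc) + ?\<sigma> * (\<tau>vsc - \<tau>lsc)"
    using \<open>deriv p \<tau>vsc < ?\<sigma>\<close> liquid_less_vapour[OF lsc]
    by (intro add_strict_left_mono mult_strict_right_mono) auto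
  also have "\<dots> = ?\<sigma> * (\<tau>R - \<tau>lsc)"
    by (subst distrib_left[symmetric]) simp
  finally show ?thesis
    using assms liquid_less_vapour[OF lsc] by (simp add: pos_divide_less_eq)
qed

lemma saturation_secant_slope_greater:
  assumes "\<tau>vsat < \<tau>R"
  shows "(p \<tau>R - p \<tau>vsat) / (\<tau>R - \<tau>vsat) < (p \<tau>R - p \<tau>lsat - \<zeta>) / (\<tau>R - \<tau>lsat)"
proof -
  have "{\<tau>vsat..\<tau>R} \<subseteq> vapour"
    using saturation(2) by auto
  then have "p \<tau>R - p \<tau>vsat < 0"
    using p_strict_antimono assms by fastforce
  moreover have "\<tau>lsat < \<tau>vsat"
    using liquid_less_vapour saturation by blast
  ultimately have "(p \<tau>R - p \<tau>vsat) / (\<tau>R - \<tau>vsat) < (p \<tau>R - p \<tau>vsat) / (\<tau>R - \<tau>lsat)"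
    using assms by (intro divide_strict_left_mono_neg) auto
  then show ?thesis
    using saturation(3) by (simp add: algebra_simps)
qed

lemma kc_between:
  assumes "t \<in> {\<tau>lsc..\<tau>lsat}" "\<tau>vsc < \<tau>R"
  shows "t < kc t" and "kc t \<in> {\<tau>vmin<..<\<tau>R}"
  using assms kinetic_domain_liquid liquid_less_vapour[OF _ kc_vapour] kc_vapour kc_bounds(2)
  by force+

lemma chord_slope_difference_strict_mono:
  assumes "\<tau>vsc < \<tau>R"
  shows "strict_mono_on {\<tau>lsc..\<tau>lsat}
    (\<lambda>t. (p \<tau>R - p t - \<zeta>) / (\<tau>R - t) - (p \<tau>R - p (kc t)) / (\<tau>R - kc t))"
proof (rule strict_mono_onI)
  fix r s assume rs: "r \<in> {\<tau>lsc..\<tau>lsat}" "s \<in> {\<tau>lsc..\<tau>lsat}" "r < s"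
  have "\<tau>vsat < \<tau>R"
    using kc_bounds(2)[of \<tau>lsat] kc_saturation sonic_liquid_bounds assms by auto
  have "(p \<tau>R - p (kc s)) / (\<tau>R - kc s) \<le> (p \<tau>R - p (kc r)) / (\<tau>R - kc r)"
    using strict_mono_on_leD[OF vapour_secant_slope_strict_mono] kc_between(2)[OF _ assms] rs
      monotone_onD[OF kc_antimono] by simp
  moreover have "(p \<tau>R - p r - \<zeta>) / (\<tau>R - r) < (p \<tau>R - p s - \<zeta>) / (\<tau>R - s)"
    using strict_mono_onD[OF liquid_secant_slope_strict_mono[OF \<open>\<tau>vsat < \<tau>R\<close>]] rs by blast
  ultimately show "(p \<tau>R - p r - \<zeta>) / (\<tau>R - r) - (p \<tau>R - p (kc r)) / (\<tau>R - kc r)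
      < (p \<tau>R - p s - \<zeta>) / (\<tau>R - s) - (p \<tau>R - p (kc s)) / (\<tau>R - kc s)"
    by linarith
qed

lemma chord_slope_difference_continuous:
  assumes "\<tau>vsc < \<tau>R"
  shows "continuous_on {\<tau>lsc..\<tau>lsat}
    (\<lambda>t. (p \<tau>R - p t - \<zeta>) / (\<tau>R - t) - (p \<tau>R - p (kc t)) / (\<tau>R - kc t))"
proof -
  have "continuous_on {\<tau>lsc..\<tau>lsat} (\<lambda>t. p (kc t))"
    using continuous_on_compose2[OF p_continuous_on kc_continuous] kc_vapour by blast
  moreover have "continuous_on {\<tau>lsc..\<tau>lsat} p"
    using continuous_on_subset[OF p_continuous_on] kinetic_domain_liquid by blast
  moreover have "\<forall>t\<in>{\<tau>lsc..\<tau>lsat}. \<tau>R - t \<noteq> 0" "\<forall>t\<in>{\<tau>lsc..\<tau>lsat}. \<tau>R - kc t \<noteq> 0"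
    using kc_between[OF _ assms] by fastforce+
  ultimately show ?thesis
    by (intro continuous_intros kc_continuous)
qed

lemma chord_point_unique:
  assumes "\<tau>vsc < \<tau>R"
  shows "\<exists>!t. t \<in> {\<tau>lsc..\<tau>lsat} \<and>
           (p (kc t) - p t - \<zeta>) / (kc t - t) = (p \<tau>R - p t - \<zeta>) / (\<tau>R - t)"
    and "t \<in> {\<tau>lsc..\<tau>lsat} \<Longrightarrow>
           (p (kc t) - p t - \<zeta>) / (kc t - t) = (p \<tau>R - p t - \<zeta>) / (\<tau>R - t) \<Longrightarrow>
           t \<in> {\<tau>lsc<..<\<tau>lsat}"
proof -
  define F where "F t = (p \<tau>R - p t - \<zeta>) / (\<tau>R - t) - (p \<tau>R - p (kc t)) / (\<tau>R - kc t)" for t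
  have zero_iff: "(p (kc t) - p t - \<zeta>) / (kc t - t) = (p \<tau>R - p t - \<zeta>) / (\<tau>R - t) \<longleftrightarrow> F t = 0"
    if "t \<in> {\<tau>lsc..\<tau>lsat}" for t
    using secant_slopes_eq_iff[of t "kc t" \<tau>R "p (kc t)" "p t + \<zeta>" "p \<tau>R"] kc_between[OF that assms]
    unfolding F_def by (simp add: diff_diff_eq)
  have "\<tau>vsat < \<tau>R"
    using kc_bounds(2)[of \<tau>lsat] kc_saturation sonic_liquid_bounds assms by auto
  have mono: "strict_mono_on {\<tau>lsc..\<tau>lsat} F"
    using chord_slope_difference_strict_mono[OF assms] unfolding F_def .
  have ends: "F \<tau>lsc < 0" "0 < F \<tau>lsat"
    using sonic_secant_slope_less[OF assms] saturation_secant_slope_greater[OF \<open>\<tau>vsat < \<tau>R\<close>]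
    unfolding F_def kc_saturation by auto
  have "\<exists>!t. t \<in> {\<tau>lsc..\<tau>lsat} \<and> F t = 0"
    using strict_mono_on_unique_zero[OF mono] chord_slope_difference_continuous[OF assms]
      ends sonic_liquid_bounds unfolding F_def by simp
  moreover have "t \<in> {\<tau>lsc..\<tau>lsat} \<and> (p (kc t) - p t - \<zeta>) / (kc t - t) = (p \<tau>R - p t - \<zeta>) / (\<tau>R - t)
      \<longleftrightarrow> t \<in> {\<tau>lsc..\<tau>lsat} \<and> F t = 0" for t
    using zero_iff by blast
  ultimately show "\<exists>!t. t \<in> {\<tau>lsc..\<tau>lsat} \<and>
           (p (kc t) - p t - \<zeta>) / (kc t - t) = (p \<tau>R - p t - \<zeta>) / (\<tau>R - t)"
    by (simp only:)
  show "t \<in> {\<tau>lsc<..<\<tau>lsat}"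
    if "t \<in> {\<tau>lsc..\<tau>lsat}" "(p (kc t) - p t - \<zeta>) / (kc t - t) = (p \<tau>R - p t - \<zeta>) / (\<tau>R - t)"
  proof -
    have "t \<noteq> \<tau>lsc" "t \<noteq> \<tau>lsat"
      using that zero_iff[OF that(1)] ends by auto
    then show ?thesis
      using that(1) by auto
  qed
qed

end

theorem lemma3p5:
  fixes \<tau>lmin \<tau>lmax \<tau>vmin \<zeta>min \<zeta>max :: real
    and p \<psi> \<mu> :: "real \<Rightarrow> real"
    and \<zeta> \<tau>lsat \<tau>vsat \<tau>lsc \<tau>vse :: real
    and kc ke kc' ke' :: "real \<Rightarrow> real"
  defines "Al \<equiv> {\<tau>lmin<..<\<tau>lmax}"
    and "Av \<equiv> {\<tau>vmin<..}"
    and "Z \<equiv> {\<zeta>min<..<\<zeta>max}"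
    and "\<tau>vsc \<equiv> kc \<tau>lsc"
    and "\<tau>lse \<equiv> ke \<tau>vse"
  assumes params: "0 < \<tau>lmin" "\<tau>lmin < \<tau>lmax" "\<tau>lmax < \<tau>vmin" "\<zeta>min < 0" "0 < \<zeta>max"
    and reg_p: "Ck_on 2 (Al \<union> Av) p"
    and reg_psi: "Ck_on 3 (Al \<union> Av) \<psi>"
    and reg_mu: "Ck_on 3 (Al \<union> Av) \<mu>"
    and p_psi: "\<forall>\<tau>\<in>Al \<union> Av. (\<psi> has_real_derivative - p \<tau>) (at \<tau>)"
    and mu_def: "\<forall>\<tau>\<in>Al \<union> Av. \<mu> \<tau> = \<psi> \<tau> + p \<tau> * \<tau>"
    and H1: "\<forall>\<tau>\<in>Al \<union> Av. deriv p \<tau> < 0"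
    and H2: "\<forall>\<tau>\<in>Al \<union> Av. deriv (deriv p) \<tau> > 0"
    and H3: "\<forall>z\<in>Z. \<exists>tl\<in>Al. \<exists>tv\<in>Av. p tv - p tl = z \<and> \<mu> tv = \<mu> tl"
    and H4: "filterlim p at_top (at_right \<tau>lmin)"
    and H5: "\<forall>tl\<in>Al. \<forall>tv\<in>Av. deriv p tl < deriv p tv"
    and H6: "((\<lambda>R. \<integral>\<^sup>+ x. ennreal (sound_speed p x) * indicator {\<tau>vmin<..R} x \<partial>lborel)
               \<longlongrightarrow> \<infinity>) at_top"
    and zeta: "\<zeta> \<in> Z"
    and sat: "\<tau>lsat \<in> Al" "\<tau>vsat \<in> Av" "p \<tau>vsat - p \<tau>lsat = \<zeta>" "\<mu> \<tau>vsat = \<mu> \<tau>lsat"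
    and sc_num: "\<tau>lsc \<in> {\<tau>lmin<..<\<tau>lsat}" "\<tau>vse \<in> {\<tau>vmin<..}"
    and kc_range: "\<forall>x\<in>{\<tau>lsc..\<tau>lsat}. kc x \<in> Av"
    and ke_range: "\<forall>x\<in>{\<tau>vsat..\<tau>vse}. ke x \<in> Al"
    and kc_deriv: "\<forall>x\<in>{\<tau>lsc..\<tau>lsat}. (kc has_real_derivative kc' x) (at x within {\<tau>lsc..\<tau>lsat})"
    and ke_deriv: "\<forall>x\<in>{\<tau>vsat..\<tau>vse}. (ke has_real_derivative ke' x) (at x within {\<tau>vsat..\<tau>vse})"
    and kc_mono: "\<forall>x\<in>{\<tau>lsc..\<tau>lsat}. kc' x \<le> 0"
    and ke_mono: "\<forall>x\<in>{\<tau>vsat..\<tau>vse}. ke' x \<le> 0"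
    and kc_f: "\<forall>x\<in>{\<tau>lsc..\<tau>lsat}. driving_force \<psi> p \<zeta> x (kc x) \<ge> 0"
    and ke_f: "\<forall>x\<in>{\<tau>vsat..\<tau>vse}. driving_force \<psi> p \<zeta> (ke x) x \<le> 0"
    and kc_sat: "kc \<tau>lsat = \<tau>vsat"
    and kc_sc: "\<bar>s_c p \<zeta> \<tau>lsc \<tau>vsc\<bar> = sound_speed p \<tau>vsc"
    and ke_sat: "ke \<tau>vsat = \<tau>lsat"
    and ke_se: "\<bar>s_e p \<zeta> \<tau>lse \<tau>vse\<bar> = sound_speed p \<tau>vse"
    and ke_se_deriv: "ke' \<tau>vse = 0"
  shows "(\<forall>\<tau>R\<in>{\<tau>vmin<..\<tau>vsc}.
            (\<exists>!t. t \<in> Al \<and> deriv p \<tau>R = (p \<tau>R - p t - \<zeta>) / (\<tau>R - t))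
          \<and> (\<forall>t\<in>Al. deriv p \<tau>R = (p \<tau>R - p t - \<zeta>) / (\<tau>R - t)
                      \<longleftrightarrow> sound_speed p \<tau>R = s_c p \<zeta> t \<tau>R)
          \<and> (\<forall>t\<in>Al. deriv p \<tau>R = (p \<tau>R - p t - \<zeta>) / (\<tau>R - t)
                      \<longrightarrow> t \<in> {\<tau>lmin<..\<tau>lsc}))
       \<and> (\<forall>\<tau>R. \<tau>R > \<tau>vsc \<longrightarrow>
            (\<exists>!t. t \<in> {\<tau>lsc..\<tau>lsat} \<and>
                 (p (kc t) - p t - \<zeta>) / (kc t - t) = (p \<tau>R - p t - \<zeta>) / (\<tau>R - t))
          \<and> (\<forall>t\<in>{\<tau>lsc..\<tau>lsat}.
                 (p (kc t) - p t - \<zeta>) / (kc t - t) = (p \<tau>R - p t - \<zeta>) / (\<tau>R - t)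
                 \<longleftrightarrow> s_c p \<zeta> t (kc t) = s_c p \<zeta> t \<tau>R)
          \<and> (\<forall>t\<in>{\<tau>lsc..\<tau>lsat}.
                 (p (kc t) - p t - \<zeta>) / (kc t - t) = (p \<tau>R - p t - \<zeta>) / (\<tau>R - t)
                 \<longrightarrow> t \<in> {\<tau>lsc<..<\<tau>lsat}))"
proof -
  have open_phases: "open (Al \<union> Av)"
    unfolding Al_def Av_def by (intro open_Un) auto
  note p_C2 = Ck_on_2_DERIV[OF reg_p open_phases]
  have "strict_mono_on I (deriv p)" if "I \<subseteq> Al \<union> Av" "is_interval I" for I
    using strict_mono_on_if_DERIV_pos[OF that(2), of "deriv p" "deriv (deriv p)"] p_C2(2) H2 that(1)
    by blast
  then have "strict_mono_on Al (deriv p)" "strict_mono_on Av (deriv p)"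
    unfolding Al_def Av_def by (auto simp: is_interval_1)
  moreover have "continuous_on {\<tau>lsc..\<tau>lsat} kc"
    using kc_deriv by (meson DERIV_continuous continuous_on_eq_continuous_within)
  moreover have "antimono_on {\<tau>lsc..\<tau>lsat} kc"
    using antimono_on_if_DERIV_within_nonpos kc_deriv kc_mono by blast
  ultimately interpret condensation_kinetics \<tau>lmin \<tau>lmax \<tau>vmin p \<zeta> \<tau>lsat \<tau>vsat \<tau>lsc kc
    using params p_C2(1) H1 H4 H5 sat sc_num kc_sat kc_sc
    unfolding Al_def Av_def \<tau>vsc_def by unfold_locales auto
  have "\<tau>lsc \<in> liquid"
    using sc_num sat(1) unfolding Al_def by auto
  note part_a = tangent_point_unique[OF sonic_tangency this]
  show ?thesis
    unfolding Al_def \<tau>vsc_def sound_speed_eq_s_c_iff s_c_eq_iff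
    using part_a chord_point_unique by auto
qed

end
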